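(* Let $H=(V,E)$ be a finite hypergraph with vertices $V=\{v_1,\dots,v_n\}$ and hyperedges $E=\{e_1,\dots,e_m\}$, and let $\Omega$ be the nilpotent adjacency matrix of $H$ (defined in the context). Let $k\in\mathbb{N}$, $k\ge 1$. (1) For $1\le i\ne j\le n$, $$\zeta_i\,(\Omega^k)_{ij}=\sum_{\substack{I\subseteq [n]\\ |I|=k+1}}\ \sum_{J\subseteq[m]}\omega_{I,J}\,\zeta_I\,\varepsilon_J,$$ where $\omega_{I,J}$ is the number of $k$-paths from $v_i$ to $v_j$ in $H$ whose vertex set is $\{v_t: t\in I\}$ and whose set of hyperedges is $\{e_\ell:\ell\in J\}$. (2) For $1\le i\le n$ and $k\ge 2$, $$(\Omega^k)_{ii}=\sum_{\substack{I\subseteq [n]\\ |I|=k}}\ \sum_{J\subseteq[m]}\omega_{I,J}\,\zeta_I\,\varepsilon_J,$$ where $\omega_{I,J}$ is the number of $k$-cycles in $H$ based at $v_i$ whose vertex set is $\{v_t: t\in I\}$ and whose set of hyperedges is $\{e_\ell:\ell\in J\}$.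
   Context: Algebras: $\mathfrak{Z}_n$ (the $n$-particle zeon algebra) is the commutative real algebra with unit generated by $\zeta_1,\dots,\zeta_n$ subject to $\zeta_i\zeta_j=\zeta_j\zeta_i$ and $\zeta_i^2=0$; for $I\subseteq[n]$, $\zeta_I=\prod_{i\in I}\zeta_i$ ($\zeta_\emptyset=1$), and $\{\zeta_I: I\subseteq[n]\}$ is a basis. $\mathfrak{I}_m$ (the idem-Clifford algebra) is the commutative real algebra with unit generated by $\varepsilon_1,\dots,\varepsilon_m$ subject to $\varepsilon_i\varepsilon_j=\varepsilon_j\varepsilon_i$ and $\varepsilon_i^2=\varepsilon_i$; $\varepsilon_J=\prod_{\ell\in J}\varepsilon_\ell$, and $\{\varepsilon_J\}$ is a basis. Computations take place in the commutative algebra $\mathfrak{Z}_n\otimes\mathfrak{I}_m$, with basis $\{\zeta_I\varepsilon_J\}$. Hypergraph: a hypergraph $H=(V,E)$ is a finite set $V$ with a set $E$ of nonempty subsets of $V$ (hyperedges). Its incidence matrix $C$ is the $n\times m$ matrix with $C_{i\ell}=1$ if $v_i\in e_\ell$ and $0$ otherwise. The nilpotent adjacency matrix of $H$ is $\Omega=XZ$, where $X=C\,\mathrm{diag}(\varepsilon_1,\dots,\varepsilon_m)$ ($n\times m$) and $Z=C^T\mathrm{diag}(\zeta_1,\dots,\zeta_n)$ ($m\times n$); explicitly, for all $i,j$ (including $i=j$), $\Omega_{ij}=\zeta_j\sum_{\ell:\ v_i\in e_\ell,\ v_j\in e_\ell}\varepsilon_\ell$. Walks: a $k$-walk in $H$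 is a sequence $(u_0,f_1,u_1,\dots,f_k,u_k)$ with $u_t\in V$, $f_t\in E$ and $u_{t-1},u_t\in f_t$ for $1\le t\le k$; its vertex set is $\{u_0,\dots,u_k\}$ and its hyperedge set is $\{f_1,\dots,f_k\}$. A $k$-path from $v_i$ to $v_j$ is a $k$-walk with $u_0=v_i$, $u_k=v_j$ and $u_0,\dots,u_k$ pairwise distinct. A $k$-cycle based at $v_i$ is a $k$-walk with $u_0=u_k=v_i$ and $u_0,\dots,u_{k-1}$ pairwise distinct (its vertex set is $\{u_0,\dots,u_{k-1}\}$). *)

theory Defs
  imports Complex_Main
begin

text \<open>Elements of the commutative algebra Z_n (x) I_m are represented by their
coordinates with respect to the basis zeta_I eps_J: an element is the function
sending (I, J) to the coefficient of zeta_I eps_J.  Zeon generators are indexed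
by 1..n, idempotent generators by 1..m.\<close>

type_synonym zi = "nat set \<Rightarrow> nat set \<Rightarrow> real"

definition zzero :: zi where "zzero = (\<lambda>I J. 0)"

definition zadd :: "zi \<Rightarrow> zi \<Rightarrow> zi" where
  "zadd a b = (\<lambda>I J. a I J + b I J)"

definition zscal :: "real \<Rightarrow> zi \<Rightarrow> zi" where
  "zscal c a = (\<lambda>I J. c * a I J)"

definition zsum :: "('x \<Rightarrow> zi) \<Rightarrow> 'x set \<Rightarrow> zi" where
  "zsum f S = (\<lambda>I J. \<Sum>x\<in>S. f x I J)"

definition zbasis :: "nat set \<Rightarrow> nat set \<Rightarrow> zi" where
  "zbasis I0 J0 = (\<lambda>I J. if I = I0 \<and> J = J0 then 1 else 0)"

definition zone :: zi where "zone = zbasis {} {}"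

definition zeta :: "nat \<Rightarrow> zi" where "zeta i = zbasis {i} {}"

definition eps :: "nat \<Rightarrow> zi" where "eps l = zbasis {} {l}"

text \<open>Multiplication: zeta_I1 zeta_I2 = zeta_(I1 \<union> I2) if I1, I2 disjoint and 0 otherwise;
eps_J1 eps_J2 = eps_(J1 \<union> J2).\<close>
definition zmul :: "zi \<Rightarrow> zi \<Rightarrow> zi" where
  "zmul a b = (\<lambda>I J. \<Sum>I1\<in>Pow I. \<Sum>J1\<in>Pow J. \<Sum>J2\<in>Pow J.
       if J1 \<union> J2 = J then a I1 J1 * b (I - I1) J2 else 0)"

definition mmul :: "nat \<Rightarrow> (nat \<Rightarrow> nat \<Rightarrow> zi) \<Rightarrow> (nat \<Rightarrow> nat \<Rightarrow> zi) \<Rightarrow> (nat \<Rightarrow> nat \<Rightarrow> zi)" where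
  "mmul n A B = (\<lambda>i j. zsum (\<lambda>t. zmul (A i t) (B t j)) {1..n})"

definition mid :: "nat \<Rightarrow> nat \<Rightarrow> zi" where
  "mid = (\<lambda>i j. if i = j then zone else zzero)"

fun mpow :: "nat \<Rightarrow> (nat \<Rightarrow> nat \<Rightarrow> zi) \<Rightarrow> nat \<Rightarrow> (nat \<Rightarrow> nat \<Rightarrow> zi)" where
  "mpow n A 0 = mid"
| "mpow n A (Suc k) = mmul n (mpow n A k) A"

text \<open>Hypergraph with vertices v_1..v_n (identified with 1..n) and hyperedges
e_1..e_m given by e :: nat \<Rightarrow> nat set.\<close>
definition nilp_adj :: "nat \<Rightarrow> (nat \<Rightarrow> nat set) \<Rightarrow> nat \<Rightarrow> nat \<Rightarrow> zi" where
  "nilp_adj m e = (\<lambda>i j. zmul (zeta j) (zsum eps {l\<in>{1..m}. i \<in> e l \<and> j \<in> e l}))"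

definition hypergraph :: "nat \<Rightarrow> nat \<Rightarrow> (nat \<Rightarrow> nat set) \<Rightarrow> bool" where
  "hypergraph n m e \<longleftrightarrow> (\<forall>l\<in>{1..m}. e l \<noteq> {} \<and> e l \<subseteq> {1..n}) \<and> inj_on e {1..m}"

text \<open>A k-walk (u_0, f_1, u_1, ..., f_k, u_k): us = [u_0..u_k] (vertex indices),
fs = [f_1..f_k] (hyperedge indices).\<close>
definition is_walk :: "nat \<Rightarrow> nat \<Rightarrow> (nat \<Rightarrow> nat set) \<Rightarrow> nat \<Rightarrow> nat list \<Rightarrow> nat list \<Rightarrow> bool" where
  "is_walk n m e k us fs \<longleftrightarrow> length us = k + 1 \<and> length fs = k \<and>
     set us \<subseteq> {1..n} \<and> set fs \<subseteq> {1..m} \<and>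
     (\<forall>t<k. us ! t \<in> e (fs ! t) \<and> us ! (t+1) \<in> e (fs ! t))"

definition is_path :: "nat \<Rightarrow> nat \<Rightarrow> (nat \<Rightarrow> nat set) \<Rightarrow> nat \<Rightarrow> nat \<Rightarrow> nat \<Rightarrow> nat list \<Rightarrow> nat list \<Rightarrow> bool" where
  "is_path n m e k i j us fs \<longleftrightarrow> is_walk n m e k us fs \<and> us ! 0 = i \<and> us ! k = j \<and> distinct us"

definition is_cycle :: "nat \<Rightarrow> nat \<Rightarrow> (nat \<Rightarrow> nat set) \<Rightarrow> nat \<Rightarrow> nat \<Rightarrow> nat list \<Rightarrow> nat list \<Rightarrow> bool" where
  "is_cycle n m e k i us fs \<longleftrightarrow> is_walk n m e k us fs \<and> us ! 0 = i \<and> us ! k = i \<and> distinct (take k us)"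

definition path_count :: "nat \<Rightarrow> nat \<Rightarrow> (nat \<Rightarrow> nat set) \<Rightarrow> nat \<Rightarrow> nat \<Rightarrow> nat \<Rightarrow> nat set \<Rightarrow> nat set \<Rightarrow> nat" where
  "path_count n m e k i j I J = card {(us, fs). is_path n m e k i j us fs \<and> set us = I \<and> set fs = J}"

definition cycle_count :: "nat \<Rightarrow> nat \<Rightarrow> (nat \<Rightarrow> nat set) \<Rightarrow> nat \<Rightarrow> nat \<Rightarrow> nat set \<Rightarrow> nat set \<Rightarrow> nat" where
  "cycle_count n m e k i I J = card {(us, fs). is_cycle n m e k i us fs \<and> set (take k us) = I \<and> set fs = J}"

end

theory Submission
  imports Defs
begin

text \<open>Entry (i, j) of Omega^k is the sum, over all walks
u_0 = v_i, f_1, u_1, ..., f_k, u_k = v_j, of zeta_{u_1} ... zeta_{u_k} eps_{f_1} ... eps_{f_k}.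
Since the zeon generators square to zero and the idempotent ones are absorbed, a walk
contributes exactly when u_1, ..., u_k are distinct, and it then contributes the basis element
indexed by these vertices and by its set of hyperedges.  So the coefficients of Omega^k count
these tail-distinct walks, which is proved by induction on k, splitting off the last step.
Multiplying by zeta_i discards the walks returning to v_i and adds i to the vertex set, which
leaves the paths.  For i = j the tail-distinct walks are exactly the cycles, because the tail
of a closed walk is a rotation of its first k vertices.\<close>

lemma zsum_zbasis_coeff:
  assumes "finite A"
  shows "zsum (\<lambda>(I, J). zscal (c I J) (zbasis I J)) A I0 J0 = (if (I0, J0) \<in> A then c I0 J0 else 0)"
proof -
  have "(case x of (I, J) \<Rightarrow> zscal (c I J) (zbasis I J)) I0 J0 = (if (I0, J0) = x then c I0 J0 else 0)"
    for x
    by (cases x) (auto simp: zscal_def zbasis_def)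
  then show ?thesis
    using assms by (simp add: zsum_def)
qed

lemma zmul_coeff_infinite: "infinite I \<or> infinite J \<Longrightarrow> zmul a b I J = 0"
  by (auto simp: zmul_def)

lemma zmul_zeta_coeff:
  assumes "finite I" "finite J"
  shows "zmul (zeta j) b I J = (if j \<in> I then b (I - {j}) J else 0)"
proof -
  have "zmul (zeta j) b I J = (\<Sum>I1\<in>Pow I. if I1 = {j} then b (I - I1) J else 0)"
    unfolding zmul_def zeta_def zbasis_def
  proof (intro sum.cong refl)
    fix I1 assume "I1 \<in> Pow I"
    have "(\<Sum>J1\<in>Pow J. \<Sum>J2\<in>Pow J. if J1 \<union> J2 = J
            then (if I1 = {j} \<and> J1 = {} then 1 else 0) * b (I - I1) J2 else 0)
          = (\<Sum>J1\<in>Pow J. if J1 = {} then (if I1 = {j} then b (I - I1) J else 0) else 0)"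
    proof (intro sum.cong refl)
      fix J1 assume "J1 \<in> Pow J"
      then show "(\<Sum>J2\<in>Pow J. if J1 \<union> J2 = J
            then (if I1 = {j} \<and> J1 = {} then 1 else 0) * b (I - I1) J2 else 0)
          = (if J1 = {} then (if I1 = {j} then b (I - I1) J else 0) else 0)"
        using assms by (cases "I1 = {j} \<and> J1 = {}") (auto intro: sum.neutral)
    qed
    also have "\<dots> = (if I1 = {j} then b (I - I1) J else 0)"
      using assms by simp
    finally show "(\<Sum>J1\<in>Pow J. \<Sum>J2\<in>Pow J. if J1 \<union> J2 = J
            then (if I1 = {j} \<and> J1 = {} then 1 else 0) * b (I - I1) J2 else 0)
          = (if I1 = {j} then b (I - I1) J else 0)" .
  qed
  also have "\<dots> = (if j \<in> I then b (I - {j}) J else 0)"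
    using assms by simp
  finally show ?thesis .
qed

lemma zeta_eps_sum_coeff:
  assumes "finite S"
  shows "zmul (zeta j) (zsum eps S) I J = (if I = {j} \<and> (\<exists>l\<in>S. J = {l}) then 1 else 0)"
proof (cases "finite I \<and> finite J")
  case True
  have "zsum eps S I' J = (if I' = {} \<and> (\<exists>l\<in>S. J = {l}) then 1 else 0)" for I'
    using assms by (cases "I' = {}") (auto simp: zsum_def eps_def zbasis_def)
  then show ?thesis
    using True by (auto simp: zmul_zeta_coeff)
qed (auto simp: zmul_coeff_infinite)

lemma zmul_zeta_eps_sum_coeff:
  assumes S: "finite S" and I: "finite I" and J: "finite J"
  shows "zmul a (zmul (zeta j) (zsum eps S)) I J =
    (if j \<in> I then \<Sum>J1\<in>Pow J. real (card {l\<in>S. insert l J1 = J}) * a (I - {j}) J1 else 0)"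
proof -
  let ?c = "\<lambda>J1. real (card {l\<in>S. insert l J1 = J})"
  have inner: "(\<Sum>J2\<in>Pow J. if J1 \<union> J2 = J then a I1 J1 * zmul (zeta j) (zsum eps S) (I - I1) J2 else 0)
      = (if I - I1 = {j} then ?c J1 * a I1 J1 else 0)" for I1 J1
  proof (cases "I - I1 = {j}")
    case True
    have "(\<Sum>J2\<in>Pow J. if J1 \<union> J2 = J then a I1 J1 * zmul (zeta j) (zsum eps S) (I - I1) J2 else 0)
        = (\<Sum>J2\<in>Pow J. if J1 \<union> J2 = J \<and> (\<exists>l\<in>S. J2 = {l}) then a I1 J1 else 0)"
      using True by (intro sum.cong) (auto simp: zeta_eps_sum_coeff[OF S])
    also have "\<dots> = (\<Sum>J2\<in>{J2\<in>Pow J. J1 \<union> J2 = J \<and> (\<exists>l\<in>S. J2 = {l})}. a I1 J1)"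
      using J by (intro sum.inter_filter[symmetric]) simp
    also have "{J2\<in>Pow J. J1 \<union> J2 = J \<and> (\<exists>l\<in>S. J2 = {l})} = (\<lambda>l. {l}) ` {l\<in>S. insert l J1 = J}"
      by auto
    also have "(\<Sum>J2\<in>(\<lambda>l. {l}) ` {l\<in>S. insert l J1 = J}. a I1 J1) = ?c J1 * a I1 J1"
      by (simp add: card_image)
    finally show ?thesis
      using True by simp
  next
    case False
    then show ?thesis
      by (simp, intro sum.neutral) (auto simp: zeta_eps_sum_coeff[OF S])
  qed
  have "zmul a (zmul (zeta j) (zsum eps S)) I J
      = (\<Sum>I1\<in>Pow I. if I1 = I - {j} \<and> j \<in> I then \<Sum>J1\<in>Pow J. ?c J1 * a I1 J1 else 0)"
    unfolding zmul_def[of a] inner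
  proof (intro sum.cong refl)
    fix I1 assume "I1 \<in> Pow I"
    then have "I - I1 = {j} \<longleftrightarrow> I1 = I - {j} \<and> j \<in> I"
      by blast
    moreover have "(\<Sum>x\<in>A. if P then f x else 0) = (if P then sum f A else 0)" for P A and f :: "nat set \<Rightarrow> real"
      by simp
    ultimately show "(\<Sum>J1\<in>Pow J. if I - I1 = {j} then ?c J1 * a I1 J1 else 0)
      = (if I1 = I - {j} \<and> j \<in> I then \<Sum>J1\<in>Pow J. ?c J1 * a I1 J1 else 0)"
      by (simp only:)
  qed
  also have "\<dots> = (if j \<in> I then \<Sum>J1\<in>Pow J. ?c J1 * a (I - {j}) J1 else 0)"
    using I by auto
  finally show ?thesis .
qed

definition edges_between :: "nat \<Rightarrow> (nat \<Rightarrow> nat set) \<Rightarrow> nat \<Rightarrow> nat \<Rightarrow> nat set" where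
  "edges_between m e t j = {l\<in>{1..m}. t \<in> e l \<and> j \<in> e l}"

lemma nilp_adj_eq: "nilp_adj m e t j = zmul (zeta j) (zsum eps (edges_between m e t j))"
  by (simp add: nilp_adj_def edges_between_def)

lemma finite_edges_between: "finite (edges_between m e t j)"
  by (simp add: edges_between_def)

lemma is_walk_snoc:
  assumes "length us = Suc k"
  shows "is_walk n m e (Suc k) (us @ [x]) (fs @ [l]) \<longleftrightarrow>
    is_walk n m e k us fs \<and> x \<in> {1..n} \<and> l \<in> {1..m} \<and> us ! k \<in> e l \<and> x \<in> e l"
proof (cases "length fs = k")
  case True
  have all_Suc: "(\<forall>t<Suc k. P t) \<longleftrightarrow> (\<forall>t<k. P t) \<and> P k" for P
    by (auto simp: less_Suc_eq)
  have prefix: "(\<forall>t<k. (us @ [x]) ! t \<in> e ((fs @ [l]) ! t) \<and> (us @ [x]) ! (t + 1) \<in> e ((fs @ [l]) ! t))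
      \<longleftrightarrow> (\<forall>t<k. us ! t \<in> e (fs ! t) \<and> us ! (t + 1) \<in> e (fs ! t))"
    using assms True by (simp add: nth_append)
  show ?thesis
    unfolding is_walk_def all_Suc prefix using assms True by (simp add: nth_append conj_comms)
next
  case False
  then show ?thesis
    using assms by (simp add: is_walk_def)
qed

definition tail_distinct_walks ::
  "nat \<Rightarrow> nat \<Rightarrow> (nat \<Rightarrow> nat set) \<Rightarrow> nat \<Rightarrow> nat \<Rightarrow> nat \<Rightarrow> nat set \<Rightarrow> nat set \<Rightarrow> (nat list \<times> nat list) set"
where
  "tail_distinct_walks n m e k i j I J = {(us, fs). is_walk n m e k us fs \<and> us ! 0 = i \<and> us ! k = j \<and>
      distinct (tl us) \<and> set (tl us) = I \<and> set fs = J}"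

lemma finite_tail_distinct_walks: "finite (tail_distinct_walks n m e k i j I J)"
proof (rule finite_subset)
  show "tail_distinct_walks n m e k i j I J \<subseteq>
      {us. set us \<subseteq> {1..n} \<and> length us = k + 1} \<times> {fs. set fs \<subseteq> {1..m} \<and> length fs = k}"
    by (auto simp: tail_distinct_walks_def is_walk_def)
qed (intro finite_cartesian_product finite_lists_length_eq; simp)

lemma tail_distinct_walksD:
  assumes "(us, fs) \<in> tail_distinct_walks n m e k i j I J"
  shows "length us = Suc k" "length fs = k" "set us \<subseteq> {1..n}" "us ! k = j" "set (tl us) = I" "set fs = J"
  using assms by (auto simp: tail_distinct_walks_def is_walk_def)

lemma tail_distinct_walks_eq_empty_infinite:
  assumes "infinite I \<or> infinite J"
  shows "tail_distinct_walks n m e k i j I J = {}"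
  using assms by (auto simp: tail_distinct_walks_def)

lemma tail_distinct_walks_0:
  assumes "i \<in> {1..n}"
  shows "tail_distinct_walks n m e 0 i j I J = (if i = j \<and> I = {} \<and> J = {} then {([i], [])} else {})"
proof -
  have "(us, fs) \<in> tail_distinct_walks n m e 0 i j I J \<longleftrightarrow>
      i = j \<and> I = {} \<and> J = {} \<and> us = [i] \<and> fs = []" for us fs
    using assms by (cases us) (auto simp: tail_distinct_walks_def is_walk_def)
  then show ?thesis
    by auto
qed

lemma snoc_in_tail_distinct_walks_iff:
  assumes "j \<in> {1..n}" "j \<in> I" "length us = Suc k"
  shows "(us @ [x], fs @ [l]) \<in> tail_distinct_walks n m e (Suc k) i j I J \<longleftrightarrow>
    x = j \<and> (us, fs) \<in> tail_distinct_walks n m e k i (us ! k) (I - {j}) (set fs) \<and>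
    l \<in> edges_between m e (us ! k) j \<and> insert l (set fs) = J"
proof (cases "x = j")
  case True
  have "us \<noteq> []"
    using assms(3) by auto
  then have nth: "tl (us @ [j]) = tl us @ [j]" "(us @ [j]) ! 0 = us ! 0" "(us @ [j]) ! Suc k = j"
    using assms(3) by (simp_all add: nth_append)
  have edges: "set (fs @ [l]) = insert l (set fs)"
    by simp
  have tail: "distinct (tl us @ [j]) \<and> set (tl us @ [j]) = I \<longleftrightarrow> distinct (tl us) \<and> set (tl us) = I - {j}"
    using assms(2) by auto
  show ?thesis
    unfolding True tail_distinct_walks_def mem_Collect_eq prod.case is_walk_snoc[OF assms(3)] nth edges
      edges_between_def
    using assms(1) tail by argo
next
  case False
  then show ?thesis
    using assms(3) by (simp add: tail_distinct_walks_def nth_append)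
qed

lemma tail_distinct_walks_Suc_eq_empty:
  assumes "j \<notin> I"
  shows "tail_distinct_walks n m e (Suc k) i j I J = {}"
proof -
  have "j \<in> I" if "(us, fs) \<in> tail_distinct_walks n m e (Suc k) i j I J" for us fs
  proof -
    note walk = tail_distinct_walksD[OF that]
    have "tl us ! k = j" "k < length (tl us)"
      using walk(1,4) by (simp_all add: nth_tl)
    then show "j \<in> I"
      using walk(5) nth_mem by metis
  qed
  then show ?thesis
    using assms by auto
qed

lemma tail_distinct_walks_Suc_eq_image:
  assumes j: "j \<in> {1..n}" "j \<in> I"
  shows "tail_distinct_walks n m e (Suc k) i j I J =
    (\<lambda>(t, J1, l, us, fs). (us @ [j], fs @ [l])) ` (SIGMA t:{1..n}. SIGMA J1:Pow J.
      {l\<in>edges_between m e t j. insert l J1 = J} \<times> tail_distinct_walks n m e k i t (I - {j}) J1)"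
    (is "_ = ?extend ` ?T")
proof (intro equalityI subsetI)
  fix p assume p: "p \<in> tail_distinct_walks n m e (Suc k) i j I J"
  obtain us fs where p_eq: "p = (us, fs)"
    by fastforce
  note lengths = tail_distinct_walksD(1,2)[OF p[unfolded p_eq]]
  obtain us' x where us: "us = us' @ [x]"
    using lengths(1) by (cases us rule: rev_exhaust) auto
  obtain fs' l where fs: "fs = fs' @ [l]"
    using lengths(2) by (cases fs rule: rev_exhaust) auto
  have len: "length us' = Suc k"
    using lengths(1) us by simp
  have "(us' @ [x], fs' @ [l]) \<in> tail_distinct_walks n m e (Suc k) i j I J"
    using p p_eq us fs by simp
  then have walk: "(us', fs') \<in> tail_distinct_walks n m e k i (us' ! k) (I - {j}) (set fs')"
    and edge: "l \<in> edges_between m e (us' ! k) j" "insert l (set fs') = J" and "x = j"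
    unfolding snoc_in_tail_distinct_walks_iff[OF j len] by auto
  have "us' ! k \<in> {1..n}"
    using tail_distinct_walksD(3)[OF walk] len by (simp add: subset_iff)
  then have "(us' ! k, set fs', l, us', fs') \<in> ?T"
    using walk edge by auto
  moreover have "p = ?extend (us' ! k, set fs', l, us', fs')"
    using p_eq us fs \<open>x = j\<close> by simp
  ultimately show "p \<in> ?extend ` ?T"
    by blast
next
  fix p assume "p \<in> ?extend ` ?T"
  then obtain t J1 l us fs where p: "p = (us @ [j], fs @ [l])"
    and edge: "l \<in> edges_between m e t j" "insert l J1 = J"
    and walk: "(us, fs) \<in> tail_distinct_walks n m e k i t (I - {j}) J1"
    by auto
  show "p \<in> tail_distinct_walks n m e (Suc k) i j I J"
    using walk edge tail_distinct_walksD[OF walk]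
    unfolding p snoc_in_tail_distinct_walks_iff[OF j tail_distinct_walksD(1)[OF walk]] by simp
qed

lemma card_tail_distinct_walks_Suc:
  assumes j: "j \<in> {1..n}" "j \<in> I" and J: "finite J"
  shows "card (tail_distinct_walks n m e (Suc k) i j I J) =
    (\<Sum>t\<in>{1..n}. \<Sum>J1\<in>Pow J. card {l\<in>edges_between m e t j. insert l J1 = J} *
        card (tail_distinct_walks n m e k i t (I - {j}) J1))"
proof -
  let ?T = "SIGMA t:{1..n}. SIGMA J1:Pow J.
    {l\<in>edges_between m e t j. insert l J1 = J} \<times> tail_distinct_walks n m e k i t (I - {j}) J1"
  have "inj_on (\<lambda>(t, J1, l, us, fs). (us @ [j], fs @ [l])) ?T"
  proof (rule inj_on_inverseI)
    fix q assume "q \<in> ?T"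
    then obtain t J1 l us fs where q: "q = (t, J1, l, us, fs)"
      and walk: "(us, fs) \<in> tail_distinct_walks n m e k i t (I - {j}) J1"
      by auto
    show "(\<lambda>(us, fs). (butlast us ! k, set (butlast fs), last fs, butlast us, butlast fs))
        ((\<lambda>(t, J1, l, us, fs). (us @ [j], fs @ [l])) q) = q"
      using tail_distinct_walksD[OF walk] by (simp add: q)
  qed
  then have "card (tail_distinct_walks n m e (Suc k) i j I J) = card ?T"
    unfolding tail_distinct_walks_Suc_eq_image[OF j] by (rule card_image)
  also have "\<dots> = (\<Sum>t\<in>{1..n}. \<Sum>J1\<in>Pow J. card {l\<in>edges_between m e t j. insert l J1 = J} *
        card (tail_distinct_walks n m e k i t (I - {j}) J1))"
    using J by (simp add: card_cartesian_product finite_edges_between finite_tail_distinct_walks)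
  finally show ?thesis .
qed

lemma mpow_nilp_adj_coeff:
  assumes i: "i \<in> {1..n}" and j: "j \<in> {1..n}"
  shows "mpow n (nilp_adj m e) k i j I J = real (card (tail_distinct_walks n m e k i j I J))"
  using j
proof (induction k arbitrary: j I J)
  case 0
  then show ?case
    using tail_distinct_walks_0[OF i] by (simp add: mid_def zone_def zbasis_def zzero_def)
next
  case (Suc k)
  have step: "mpow n (nilp_adj m e) (Suc k) i j I J =
      (\<Sum>t\<in>{1..n}. zmul (mpow n (nilp_adj m e) k i t) (nilp_adj m e t j) I J)"
    by (simp add: mmul_def zsum_def)
  show ?case
  proof (cases "finite I \<and> finite J")
    case False
    then show ?thesis
      unfolding step by (simp add: zmul_coeff_infinite tail_distinct_walks_eq_empty_infinite)
  next
    case True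
    have "mpow n (nilp_adj m e) (Suc k) i j I J = (\<Sum>t\<in>{1..n}. if j \<in> I then
        \<Sum>J1\<in>Pow J. real (card {l\<in>edges_between m e t j. insert l J1 = J}) *
          real (card (tail_distinct_walks n m e k i t (I - {j}) J1)) else 0)"
      unfolding step using True
      by (intro sum.cong refl) (simp add: nilp_adj_eq zmul_zeta_eps_sum_coeff finite_edges_between Suc.IH)
    also have "\<dots> = real (card (tail_distinct_walks n m e (Suc k) i j I J))"
      using True Suc.prems
      by (cases "j \<in> I") (simp_all add: card_tail_distinct_walks_Suc tail_distinct_walks_Suc_eq_empty)
    finally show ?thesis .
  qed
qed

lemma path_count_eq_card_tail_distinct_walks:
  "path_count n m e k i j I J = (if i \<in> I then card (tail_distinct_walks n m e k i j (I - {i}) J) else 0)"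
proof -
  let ?P = "{(us, fs). is_path n m e k i j us fs \<and> set us = I \<and> set fs = J}"
  have "?P = (if i \<in> I then tail_distinct_walks n m e k i j (I - {i}) J else {})"
  proof (intro set_eqI, clarify)
    fix us fs
    show "(us, fs) \<in> ?P \<longleftrightarrow> (us, fs) \<in> (if i \<in> I then tail_distinct_walks n m e k i j (I - {i}) J else {})"
    proof (cases us)
      case Nil
      then show ?thesis
        by (simp add: is_path_def is_walk_def tail_distinct_walks_def)
    next
      case (Cons u us')
      have "i \<notin> set us' \<and> insert i (set us') = I \<longleftrightarrow> i \<in> I \<and> set us' = I - {i}"
        by blast
      then show ?thesis
        unfolding Cons by (auto simp: is_path_def tail_distinct_walks_def)
    qed
  qed
  then show ?thesis
    by (simp add: path_count_def)
qed

lemma path_count_eq_0: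
  assumes "(I, J) \<notin> {I. I \<subseteq> {1..n} \<and> card I = k + 1} \<times> Pow {1..m}"
  shows "path_count n m e k i j I J = 0"
proof -
  have False if "is_path n m e k i j us fs" "set us = I" "set fs = J" for us fs
    using that assms distinct_card[of us] by (auto simp: is_path_def is_walk_def)
  then have "{(us, fs). is_path n m e k i j us fs \<and> set us = I \<and> set fs = J} = {}"
    by blast
  then show ?thesis
    unfolding path_count_def by (metis card.empty)
qed

lemma tl_eq_rotate1_take:
  assumes "length us = Suc k" "k \<ge> 1" "us ! 0 = us ! k"
  shows "tl us = rotate1 (take k us)"
proof -
  obtain u us' where us: "us = u # us'"
    using assms(1) by (cases us) auto
  have "us' = take (k - 1) us' @ [us' ! (k - 1)]"
    using assms(1,2) us take_Suc_conv_app_nth[of "k - 1" us'] by simp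
  moreover have "us' ! (k - 1) = u"
    using assms(2,3) us by (cases k) simp_all
  ultimately show ?thesis
    using assms(2) us by (cases k) simp_all
qed

lemma cycle_count_eq_card_tail_distinct_walks:
  assumes "k \<ge> 1"
  shows "cycle_count n m e k i I J = card (tail_distinct_walks n m e k i i I J)"
proof -
  have "is_cycle n m e k i us fs \<and> set (take k us) = I \<and> set fs = J \<longleftrightarrow>
      (us, fs) \<in> tail_distinct_walks n m e k i i I J" for us fs
  proof (cases "is_walk n m e k us fs \<and> us ! 0 = i \<and> us ! k = i")
    case True
    then have "tl us = rotate1 (take k us)"
      using assms by (intro tl_eq_rotate1_take) (auto simp: is_walk_def)
    then show ?thesis
      using True by (simp add: is_cycle_def tail_distinct_walks_def)
  qed (auto simp: is_cycle_def tail_distinct_walks_def)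
  then show ?thesis
    by (simp add: cycle_count_def)
qed

lemma cycle_count_eq_0:
  assumes "(I, J) \<notin> {I. I \<subseteq> {1..n} \<and> card I = k} \<times> Pow {1..m}"
  shows "cycle_count n m e k i I J = 0"
proof -
  have False if "is_cycle n m e k i us fs" "set (take k us) = I" "set fs = J" for us fs
    using that assms distinct_card[of "take k us"] set_take_subset[of k us]
    by (auto simp: is_cycle_def is_walk_def)
  then have "{(us, fs). is_cycle n m e k i us fs \<and> set (take k us) = I \<and> set fs = J} = {}"
    by blast
  then show ?thesis
    unfolding cycle_count_def by (metis card.empty)
qed

lemma zeta_mpow_nilp_adj_coeff:
  assumes "i \<in> {1..n}" "j \<in> {1..n}"
  shows "zmul (zeta i) (mpow n (nilp_adj m e) k i j) I J = real (path_count n m e k i j I J)"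
proof (cases "finite I \<and> finite J")
  case True
  then show ?thesis
    using assms by (simp add: zmul_zeta_coeff mpow_nilp_adj_coeff path_count_eq_card_tail_distinct_walks)
next
  case False
  then show ?thesis
    by (simp add: zmul_coeff_infinite path_count_eq_card_tail_distinct_walks
        tail_distinct_walks_eq_empty_infinite)
qed

theorem mainTheorem1:
  fixes n m k :: nat and e :: "nat \<Rightarrow> nat set"
  assumes H: "hypergraph n m e"
    and k: "k \<ge> 1"
  shows "(\<forall>i\<in>{1..n}. \<forall>j\<in>{1..n}. i \<noteq> j \<longrightarrow>
            zmul (zeta i) (mpow n (nilp_adj m e) k i j) =
            zsum (\<lambda>(I, J). zscal (real (path_count n m e k i j I J)) (zbasis I J))
                 ({I. I \<subseteq> {1..n} \<and> card I = k + 1} \<times> Pow {1..m}))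
       \<and> (k \<ge> 2 \<longrightarrow> (\<forall>i\<in>{1..n}.
            mpow n (nilp_adj m e) k i i =
            zsum (\<lambda>(I, J). zscal (real (cycle_count n m e k i I J)) (zbasis I J))
                 ({I. I \<subseteq> {1..n} \<and> card I = k} \<times> Pow {1..m})))"
proof -
  have finite_supp: "finite ({I. I \<subseteq> {1..n} \<and> card I = c} \<times> Pow {1..m})" for c :: nat
    by (auto intro: finite_subset[of _ "Pow {1..n}"])
  show ?thesis
  proof (intro conjI ballI impI ext)
    fix i j I J assume "i \<in> {1..n}" "j \<in> {1..n}"
    then show "zmul (zeta i) (mpow n (nilp_adj m e) k i j) I J =
        zsum (\<lambda>(I, J). zscal (real (path_count n m e k i j I J)) (zbasis I J))
          ({I. I \<subseteq> {1..n} \<and> card I = k + 1} \<times> Pow {1..m}) I J"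
      unfolding zsum_zbasis_coeff[OF finite_supp]
      using path_count_eq_0[of I J n k m e i j] by (simp add: zeta_mpow_nilp_adj_coeff)
  next
    fix i I J assume "i \<in> {1..n}"
    then show "mpow n (nilp_adj m e) k i i I J =
        zsum (\<lambda>(I, J). zscal (real (cycle_count n m e k i I J)) (zbasis I J))
          ({I. I \<subseteq> {1..n} \<and> card I = k} \<times> Pow {1..m}) I J"
      unfolding zsum_zbasis_coeff[OF finite_supp]
      using k cycle_count_eq_0[of I J n k m e i]
      by (simp add: mpow_nilp_adj_coeff cycle_count_eq_card_tail_distinct_walks)
  qed
qed

end
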